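(* Let $n\geq 5$, let $S$ be the set of all $3$-cycles in $S_n$, and let $CAG_n=\mathrm{Cay}(A_n,S)$. Let $\tau,\kappa\in S$ with $\tau\neq\kappa$. Then $\tau\kappa=\kappa\tau\neq e$ if and only if there is a unique $4$-cycle in $CAG_n$ containing the vertices $e$, $\tau$ and $\kappa$.
   Context: For a finite group $\Gamma$ and a subset $T\subseteq\Gamma$ with $e\notin T$ and $T=T^{-1}$, the Cayley graph $\mathrm{Cay}(\Gamma,T)$ is the undirected graph with vertex set $\Gamma$ and edge set $\{\{\gamma,t\gamma\}\mid \gamma\in\Gamma, t\in T\}$. $e$ denotes the identity permutation. *)

theory Defs
  imports "HOL-Combinatorics.Combinatorics"
begin

definition alt_group_set :: "nat \<Rightarrow> (nat \<Rightarrow> nat) set" where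
  "alt_group_set n = {p. p permutes {1..n} \<and> evenperm p}"

definition three_cycles :: "nat \<Rightarrow> (nat \<Rightarrow> nat) set" where
  "three_cycles n = {cycle_of_list [a, b, c] | a b c.
      distinct [a, b, c] \<and> a \<in> {1..n} \<and> b \<in> {1..n} \<and> c \<in> {1..n}}"

definition cay_edges :: "('a \<Rightarrow> 'a) set \<Rightarrow> ('a \<Rightarrow> 'a) set \<Rightarrow> ('a \<Rightarrow> 'a) set set" where
  "cay_edges G T = {{g, t \<circ> g} | g t. g \<in> G \<and> t \<in> T}"

definition is_4cycle :: "'v set set \<Rightarrow> 'v set set \<Rightarrow> bool" where
  "is_4cycle E C \<longleftrightarrow> (\<exists>a b c d. distinct [a, b, c, d] \<and>
      C = {{a, b}, {b, c}, {c, d}, {d, a}} \<and> C \<subseteq> E)"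

end

theory Submission
  imports Defs
begin

text \<open>
  If the supports of the 3-cycles \<open>\<tau>\<close> and \<open>\<kappa>\<close> are disjoint, then \<open>\<tau>\<kappa> = \<kappa>\<tau> \<noteq> e\<close>
  and \<open>e, \<tau>, \<kappa>\<tau>, \<kappa>\<close> is a 4-cycle. It is the only one through \<open>e, \<tau>, \<kappa>\<close>: the vertices
  \<open>\<tau>\<close> and \<open>\<kappa>\<close> are not adjacent, because \<open>\<kappa>\<tau>\<^sup>-\<^sup>1\<close> moves six points, so they are
  opposite corners, and a common neighbour \<open>s\<tau>\<close> with \<open>\<kappa> = ts\<tau>\<close> gives a factorisation
  \<open>ts = \<kappa>\<tau>\<^sup>-\<^sup>1\<close> of a product of two disjoint 3-cycles into two 3-cycles, which forces
  \<open>s \<in> {\<tau>\<^sup>-\<^sup>1, \<kappa>}\<close>.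

  If the supports meet, then either \<open>\<tau>\<kappa> \<noteq> \<kappa>\<tau>\<close> or \<open>\<kappa> = \<tau>\<^sup>-\<^sup>1\<close>, and up to rotation of
  the cycles there are four configurations; in each of them two explicit common neighbours
  \<open>s\<tau> = t\<kappa>\<close> of \<open>\<tau>\<close> and \<open>\<kappa>\<close> give two different 4-cycles through \<open>e, \<tau>, \<kappa>\<close>.
\<close>

abbreviation cycle3 :: "'a \<Rightarrow> 'a \<Rightarrow> 'a \<Rightarrow> 'a \<Rightarrow> 'a" where
  "cycle3 a b c \<equiv> cycle_of_list [a, b, c]"

lemma cycle3_apply:
  "distinct [a, b, c] \<Longrightarrow>
    cycle3 a b c y = (if y = a then b else if y = b then c else if y = c then a else y)"
  by (auto simp: transpose_def)

declare cycle_of_list.simps [simp del]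

lemma cycle3_rotate: "distinct [a, b, c] \<Longrightarrow> cycle3 b c a = cycle3 a b c"
  by (rule ext) (auto simp: cycle3_apply)

lemma cycle3_inverse: "distinct [a, b, c] \<Longrightarrow> cycle3 a c b \<circ> cycle3 a b c = id"
  by (rule ext) (auto simp: cycle3_apply)

lemma cycle3_moved: "distinct [a, b, c] \<Longrightarrow> cycle3 a b c y \<noteq> y \<Longrightarrow> y \<in> {a, b, c}"
  by (auto simp: cycle3_apply split: if_splits)

lemma cycle3_through_point:
  assumes "distinct [a, b, c]" and "p \<in> {a, b, c}"
  shows "cycle3 p (cycle3 a b c p) (cycle3 a b c (cycle3 a b c p)) = cycle3 a b c"
proof -
  from assms(2) consider "p = a" | "p = b" | "p = c" by blast
  then show ?thesis
  proof cases
    case 1 then show ?thesis using assms(1) by (auto simp: cycle3_apply)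
  next
    case 2 then show ?thesis using assms(1) cycle3_rotate[of a b c] by (auto simp: cycle3_apply)
  next
    case 3 then show ?thesis
      using assms(1) cycle3_rotate[of a b c] cycle3_rotate[of b c a] by (auto simp: cycle3_apply)
  qed
qed

lemma cycle3_rotate_to:
  assumes "distinct [a, b, c]" and "p \<in> {a, b, c}"
  obtains q r where "cycle3 a b c = cycle3 p q r" "distinct [p, q, r]" "{p, q, r} = {a, b, c}"
proof -
  from assms(2) consider "p = a" | "p = b" | "p = c" by blast
  then show thesis
  proof cases
    case 1 then show thesis using that[of b c] assms(1) by auto
  next
    case 2 then show thesis using that[of c a] assms(1) cycle3_rotate[of a b c] by auto
  next
    case 3 then show thesis using that[of a b] assms(1) cycle3_rotate[of c a b] by auto
  qed
qed

lemma evenperm_cycle3: "distinct [a, b, c] \<Longrightarrow> evenperm (cycle3 a b c)"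
  by (simp add: cycle_of_list.simps evenperm_comp permutation_swap_id evenperm_swap)

lemma cycle3_in_three_cycles:
  "distinct [a, b, c] \<Longrightarrow> {a, b, c} \<subseteq> {1..n} \<Longrightarrow> cycle3 a b c \<in> three_cycles n"
  unfolding three_cycles_def by blast

lemma three_cyclesE:
  assumes "t \<in> three_cycles n"
  obtains a b c where "t = cycle3 a b c" "distinct [a, b, c]" "{a, b, c} \<subseteq> {1..n}"
  using assms unfolding three_cycles_def by auto

lemma three_cycles_inverse: "t \<in> three_cycles n \<Longrightarrow> \<exists>t'\<in>three_cycles n. t' \<circ> t = id"
proof (erule three_cyclesE)
  fix a b c assume "t = cycle3 a b c" "distinct [a, b, c]" "{a, b, c} \<subseteq> {1..n}"
  then show ?thesis
    using cycle3_inverse[of a b c] cycle3_in_three_cycles[of a c b n] by auto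
qed

lemma id_in_alt_group_set: "id \<in> alt_group_set n"
  unfolding alt_group_set_def by simp

lemma comp_in_alt_group_set:
  assumes "g \<in> alt_group_set n" and "h \<in> alt_group_set n"
  shows "g \<circ> h \<in> alt_group_set n"
proof -
  have "permutation g" "permutation h"
    using assms by (auto simp: alt_group_set_def intro: permutes_imp_permutation)
  then show ?thesis
    using assms by (auto simp: alt_group_set_def evenperm_comp intro: permutes_compose)
qed

lemma three_cycles_subset_alt_group_set: "three_cycles n \<subseteq> alt_group_set n"
proof
  fix t assume "t \<in> three_cycles n"
  then obtain a b c where "t = cycle3 a b c" "distinct [a, b, c]" "{a, b, c} \<subseteq> {1..n}"
    by (rule three_cyclesE)
  then show "t \<in> alt_group_set n"
    unfolding alt_group_set_def
    using cycle_permutes[of "[a, b, c]"] evenperm_cycle3[of a b c] by (auto intro: permutes_subset)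
qed

lemma cay_edges_iff:
  assumes "T \<subseteq> G" and "\<And>g h. g \<in> G \<Longrightarrow> h \<in> G \<Longrightarrow> g \<circ> h \<in> G"
    and "\<And>t. t \<in> T \<Longrightarrow> \<exists>t'\<in>T. t' \<circ> t = id"
  shows "{g, h} \<in> cay_edges G T \<longleftrightarrow> g \<in> G \<and> (\<exists>t\<in>T. h = t \<circ> g)"
proof
  assume "{g, h} \<in> cay_edges G T"
  then obtain g' t where e: "{g, h} = {g', t \<circ> g'}" "g' \<in> G" "t \<in> T"
    unfolding cay_edges_def by blast
  then consider "g = g'" "h = t \<circ> g'" | "g = t \<circ> g'" "h = g'"
    by (auto simp: doubleton_eq_iff)
  then show "g \<in> G \<and> (\<exists>t\<in>T. h = t \<circ> g)"
  proof cases
    case 2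
    obtain t' where "t' \<in> T" "t' \<circ> t = id" using assms(3) e(3) by blast
    then have "h = t' \<circ> g" using 2 by (simp add: o_assoc)
    moreover have "g \<in> G" using 2 e(2,3) assms(1,2) by blast
    ultimately show ?thesis using \<open>t' \<in> T\<close> by blast
  qed (use e in blast)
next
  assume "g \<in> G \<and> (\<exists>t\<in>T. h = t \<circ> g)"
  then show "{g, h} \<in> cay_edges G T" unfolding cay_edges_def by blast
qed

abbreviation CAG_edges :: "nat \<Rightarrow> (nat \<Rightarrow> nat) set set" where
  "CAG_edges n \<equiv> cay_edges (alt_group_set n) (three_cycles n)"

lemma CAG_edges_iff:
  "{g, h} \<in> CAG_edges n \<longleftrightarrow> g \<in> alt_group_set n \<and> (\<exists>t\<in>three_cycles n. h = t \<circ> g)"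
  using three_cycles_subset_alt_group_set comp_in_alt_group_set three_cycles_inverse
  by (rule cay_edges_iff)

lemma CAG_edgeI:
  "g \<in> alt_group_set n \<Longrightarrow> t \<in> three_cycles n \<Longrightarrow> {g, t \<circ> g} \<in> CAG_edges n"
  by (auto simp: CAG_edges_iff)

lemma CAG_edge_id: "t \<in> three_cycles n \<Longrightarrow> {id, t} \<in> CAG_edges n"
  using CAG_edgeI[OF id_in_alt_group_set] by simp

definition unique_4cycle_through :: "'v set set \<Rightarrow> 'v set \<Rightarrow> bool" where
  "unique_4cycle_through E V \<longleftrightarrow> (\<exists>!C. is_4cycle E C \<and> V \<subseteq> \<Union>C)"

lemma is_4cycleI:
  "distinct [a, b, c, d] \<Longrightarrow> {{a, b}, {b, c}, {c, d}, {d, a}} \<subseteq> E \<Longrightarrow>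
    is_4cycle E {{a, b}, {b, c}, {c, d}, {d, a}}"
  unfolding is_4cycle_def by blast

lemma is_4cycle_starting_at:
  assumes "is_4cycle E C" and "v \<in> \<Union>C"
  obtains b c d where "distinct [v, b, c, d]" "C = {{v, b}, {b, c}, {c, d}, {d, v}}" "C \<subseteq> E"
proof -
  obtain a b c d where C: "distinct [a, b, c, d]" "C = {{a, b}, {b, c}, {c, d}, {d, a}}" "C \<subseteq> E"
    using assms(1) unfolding is_4cycle_def by (elim exE conjE)
  have rotations: "C = {{b, c}, {c, d}, {d, a}, {a, b}}" "C = {{c, d}, {d, a}, {a, b}, {b, c}}"
    "C = {{d, a}, {a, b}, {b, c}, {c, d}}"
    unfolding C(2) by (simp_all add: insert_commute)
  have distinct_rotations: "distinct [b, c, d, a]" "distinct [c, d, a, b]" "distinct [d, a, b, c]"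
    using C(1) by auto
  from assms(2) have "v \<in> {a, b, c, d}" unfolding C(2) by blast
  then consider "v = a" | "v = b" | "v = c" | "v = d" by blast
  then show thesis
  proof cases
    case 1 show thesis by (rule that[of b c d]) (use 1 C in simp_all)
  next
    case 2 show thesis
      by (rule that[of c d a]) (use 2 C(3) rotations(1) distinct_rotations(1) in simp_all)
  next
    case 3 show thesis
      by (rule that[of d a b]) (use 3 C(3) rotations(2) distinct_rotations(2) in simp_all)
  next
    case 4 show thesis
      by (rule that[of a b c]) (use 4 C(3) rotations(3) distinct_rotations(3) in simp_all)
  qed
qed

lemma not_unique_4cycle_through:
  assumes "distinct [u, v, x, w]" and "distinct [u, v, y, w]" and "x \<noteq> y"
    and "{{u, v}, {v, x}, {x, w}, {w, u}} \<subseteq> E" and "{{u, v}, {v, y}, {y, w}, {w, u}} \<subseteq> E"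
  shows "\<not> unique_4cycle_through E {u, v, w}"
proof
  define P where "P C \<longleftrightarrow> is_4cycle E C \<and> {u, v, w} \<subseteq> \<Union>C" for C
  let ?C1 = "{{u, v}, {v, x}, {x, w}, {w, u}}" and ?C2 = "{{u, v}, {v, y}, {y, w}, {w, u}}"
  assume "unique_4cycle_through E {u, v, w}"
  then have "\<exists>\<^sub>\<le>\<^sub>1C. P C" by (simp add: unique_4cycle_through_def P_def ex1_iff_ex_Uniq)
  moreover have "P ?C1" "P ?C2" unfolding P_def using assms(1,2,4,5) by (simp_all add: is_4cycleI)
  ultimately have "?C1 = ?C2" by (rule Uniq_D)
  moreover have "x \<in> \<Union>?C1" "x \<notin> \<Union>?C2" using assms(1-3) by auto
  ultimately show False by simp
qed

lemma unique_4cycle_throughI: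
  assumes "distinct [u, v, x, w]" and "{{u, v}, {v, x}, {x, w}, {w, u}} \<subseteq> E"
    and "{v, w} \<notin> E"
    and "\<And>y. {v, y} \<in> E \<Longrightarrow> {y, w} \<in> E \<Longrightarrow> y \<notin> {u, v, w} \<Longrightarrow> y = x"
  shows "unique_4cycle_through E {u, v, w}"
  unfolding unique_4cycle_through_def
proof (rule ex1I)
  show "is_4cycle E {{u, v}, {v, x}, {x, w}, {w, u}} \<and> {u, v, w} \<subseteq> \<Union>{{u, v}, {v, x}, {x, w}, {w, u}}"
    using assms(1,2) by (simp add: is_4cycleI)
next
  fix C assume C: "is_4cycle E C \<and> {u, v, w} \<subseteq> \<Union>C"
  then have "v \<in> \<Union>C" by blast
  with C obtain b c d where bcd: "distinct [v, b, c, d]" "C = {{v, b}, {b, c}, {c, d}, {d, v}}" "C \<subseteq> E"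
    by (elim conjE is_4cycle_starting_at)
  have E: "{v, b} \<in> E" "{b, c} \<in> E" "{c, d} \<in> E" "{d, v} \<in> E" using bcd(2,3) by auto
  have "{u, w} \<subseteq> {v, b, c, d}" using C unfolding bcd(2) by blast
  \<comment> \<open>\<open>v\<close> and \<open>w\<close> are not adjacent, so they are opposite corners\<close>
  moreover have "w \<noteq> b" using assms(3) E(1) by blast
  moreover have "w \<noteq> d" using assms(3) E(4) by (metis insert_commute)
  ultimately have wc: "w = c" and u: "u = b \<or> u = d" using assms(1) by auto
  from u show "C = {{u, v}, {v, x}, {x, w}, {w, u}}"
  proof
    assume ub: "u = b"
    have "d = x"
      using assms(4)[of d] E(3,4) insert_commute[of d v] insert_commute[of c d] bcd(1) wc ub by auto
    then show ?thesis using bcd(2) wc ub by (simp add: insert_commute)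
  next
    assume ud: "u = d"
    have "b = x" using assms(4)[of b] E(1,2) bcd(1) wc ud by auto
    then show ?thesis using bcd(2) wc ud by (simp add: insert_commute)
  qed
qed

lemma distinct_map_imp_distinct: "distinct (map f xs) \<Longrightarrow> distinct xs"
  by (simp add: distinct_map)

lemma disjoint_cycle3_comp_moves:
  "distinct [a, b, c, d, e, f] \<Longrightarrow> y \<in> {a, b, c, d, e, f} \<Longrightarrow> (cycle3 d e f \<circ> cycle3 a b c) y \<noteq> y"
  by (auto simp: cycle3_apply)

lemma cycle3_ne_disjoint_product:
  assumes "distinct [a, b, c, d, e, f]" and "distinct [p, q, r]"
  shows "cycle3 p q r \<noteq> cycle3 d e f \<circ> cycle3 a b c"
proof
  assume "cycle3 p q r = cycle3 d e f \<circ> cycle3 a b c"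
  then have "set [a, b, c, d, e, f] \<subseteq> set [p, q, r]"
    using disjoint_cycle3_comp_moves[OF assms(1)] cycle3_moved[OF assms(2)] by auto
  then have "length [a, b, c, d, e, f] \<le> length [p, q, r]"
    using card_mono[of "set [p, q, r]"] distinct_card assms by fastforce
  then show False by simp
qed

lemma cycle3_factor_of_disjoint_product:
  assumes abc: "distinct [a, b, c, d, e, f]" and pqr: "distinct [p, q, r]" and "distinct [p', q', r']"
    and eq: "cycle3 p' q' r' \<circ> cycle3 p q r = cycle3 d e f \<circ> cycle3 a b c"
  shows "cycle3 p q r = cycle3 a b c \<or> cycle3 p q r = cycle3 d e f"
proof -
  let ?P = "cycle3 d e f \<circ> cycle3 a b c"
  have "set [a, b, c, d, e, f] \<subseteq> set [p, q, r, p', q', r']"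
  proof
    fix y assume "y \<in> set [a, b, c, d, e, f]"
    then have moved: "cycle3 p' q' r' (cycle3 p q r y) \<noteq> y"
      using disjoint_cycle3_comp_moves[OF abc, of y] eq[THEN fun_cong, of y] by simp
    show "y \<in> set [p, q, r, p', q', r']"
    proof (cases "cycle3 p q r y = y")
      case True
      then show ?thesis using moved cycle3_moved[OF assms(3), of y] by simp
    next
      case False
      then show ?thesis using cycle3_moved[OF pqr, of y] by auto
    qed
  qed
  then have "card (set [a, b, c, d, e, f]) \<le> card (set [p, q, r, p', q', r'])"
    by (rule card_mono[rotated]) simp
  then have "length [p, q, r, p', q', r'] \<le> card (set [p, q, r, p', q', r'])"
    by (simp only: distinct_card[OF abc] length_Cons)
  then have D: "distinct [p, q, r, p', q', r']"
    using card_length[of "[p, q, r, p', q', r']"] card_distinct by (metis le_antisym)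
  \<comment> \<open>the supports are disjoint, so \<open>?P\<close> acts on \<open>{p, q, r}\<close> as \<open>cycle3 p q r\<close>\<close>
  have Pp: "?P p = q" and Pq: "?P q = r"
    using eq[symmetric, THEN fun_cong, of p] eq[symmetric, THEN fun_cong, of q] D
    by (auto simp: cycle3_apply)
  have "p \<in> {a, b, c, d, e, f}"
  proof (rule ccontr)
    assume "p \<notin> {a, b, c, d, e, f}"
    then have "?P p = p" using abc by (auto simp: cycle3_apply)
    then show False using Pp pqr by simp
  qed
  then consider "p \<in> {a, b, c}" | "p \<in> {d, e, f}" by auto
  then show ?thesis
  proof cases
    case 1
    then have "q = cycle3 a b c p" "r = cycle3 a b c q"
      using Pp Pq abc by (auto simp: cycle3_apply)
    then show ?thesis using cycle3_through_point[of a b c p] 1 abc by simp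
  next
    case 2
    then have "q = cycle3 d e f p" "r = cycle3 d e f q"
      using Pp Pq abc by (auto simp: cycle3_apply)
    then show ?thesis using cycle3_through_point[of d e f p] 2 abc by simp
  qed
qed

lemma disjoint_three_cycles:
  assumes abc: "distinct [a, b, c, d, e, f]" and range: "{a, b, c, d, e, f} \<subseteq> {1..n}"
  shows "cycle3 a b c \<circ> cycle3 d e f = cycle3 d e f \<circ> cycle3 a b c"
    and "cycle3 a b c \<circ> cycle3 d e f \<noteq> id"
    and "unique_4cycle_through (CAG_edges n) {id, cycle3 a b c, cycle3 d e f}"
proof -
  define \<tau> where "\<tau> = cycle3 a b c"
  define \<kappa> where "\<kappa> = cycle3 d e f"
  have S: "\<tau> \<in> three_cycles n" "\<kappa> \<in> three_cycles n" "cycle3 a c b \<in> three_cycles n"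
    unfolding \<tau>_def \<kappa>_def using abc range by (auto intro!: cycle3_in_three_cycles)
  then have A: "\<tau> \<in> alt_group_set n" "\<kappa> \<in> alt_group_set n"
    using three_cycles_subset_alt_group_set by auto
  have comm: "\<tau> \<circ> \<kappa> = \<kappa> \<circ> \<tau>"
    unfolding \<tau>_def \<kappa>_def using abc by (auto simp: cycle3_apply)
  then show "cycle3 a b c \<circ> cycle3 d e f = cycle3 d e f \<circ> cycle3 a b c"
    unfolding \<tau>_def \<kappa>_def .
  show "cycle3 a b c \<circ> cycle3 d e f \<noteq> id"
  proof
    assume "cycle3 a b c \<circ> cycle3 d e f = id"
    then have "cycle3 a b c (cycle3 d e f a) = a" by (simp add: fun_eq_iff)
    then show False using abc by (simp add: cycle3_apply)
  qed
  have inv: "cycle3 a c b \<circ> \<tau> = id" "\<tau> \<circ> cycle3 a c b = id"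
    unfolding \<tau>_def using abc cycle3_inverse[of a b c] cycle3_inverse[of a c b] by auto
  have "unique_4cycle_through (CAG_edges n) {id, \<tau>, \<kappa>}"
  proof (rule unique_4cycle_throughI)
    show "distinct [id, \<tau>, \<kappa> \<circ> \<tau>, \<kappa>]"
      unfolding \<tau>_def \<kappa>_def using abc
      by (intro distinct_map_imp_distinct[of "\<lambda>g. (g a, g d)"]) (auto simp: cycle3_apply)
    have "cycle3 a c b \<circ> (\<kappa> \<circ> \<tau>) = \<kappa>"
      using comm[symmetric] inv(1) by (simp add: o_assoc)
    then have "{\<kappa> \<circ> \<tau>, \<kappa>} \<in> CAG_edges n"
      using CAG_edgeI[OF comp_in_alt_group_set[OF A(2,1)] S(3)] by simp
    moreover have "{\<kappa>, id} \<in> CAG_edges n"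
      using CAG_edge_id[OF S(2)] by (simp add: insert_commute)
    ultimately show "{{id, \<tau>}, {\<tau>, \<kappa> \<circ> \<tau>}, {\<kappa> \<circ> \<tau>, \<kappa>}, {\<kappa>, id}} \<subseteq> CAG_edges n"
      using CAG_edge_id[OF S(1)] CAG_edgeI[OF A(1) S(2)] by simp
    show "{\<tau>, \<kappa>} \<notin> CAG_edges n"
    proof
      assume "{\<tau>, \<kappa>} \<in> CAG_edges n"
      then obtain t where t: "t \<in> three_cycles n" "\<kappa> = t \<circ> \<tau>"
        by (auto simp: CAG_edges_iff)
      then have "t = cycle3 d e f \<circ> cycle3 a c b"
        using inv(2) unfolding \<kappa>_def by (simp add: comp_assoc)
      moreover obtain p q r where "t = cycle3 p q r" "distinct [p, q, r]"
        using t(1) by (rule three_cyclesE)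
      ultimately show False
        using cycle3_ne_disjoint_product[of a c b d e f p q r] abc by auto
    qed
    fix y assume y: "{\<tau>, y} \<in> CAG_edges n" "{y, \<kappa>} \<in> CAG_edges n" "y \<notin> {id, \<tau>, \<kappa>}"
    then obtain s t where st: "s \<in> three_cycles n" "y = s \<circ> \<tau>" "t \<in> three_cycles n" "\<kappa> = t \<circ> y"
      by (auto simp: CAG_edges_iff)
    then have "t \<circ> s = cycle3 d e f \<circ> cycle3 a c b"
      using inv(2) unfolding \<kappa>_def by (simp add: comp_assoc)
    moreover obtain p q r where "s = cycle3 p q r" "distinct [p, q, r]"
      using st(1) by (rule three_cyclesE)
    moreover obtain p' q' r' where "t = cycle3 p' q' r'" "distinct [p', q', r']"
      using st(3) by (rule three_cyclesE)
    ultimately have "s = cycle3 a c b \<or> s = \<kappa>"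
      using cycle3_factor_of_disjoint_product[of a c b d e f p q r p' q' r'] abc
      unfolding \<kappa>_def by auto
    then show "y = \<kappa> \<circ> \<tau>" using st(2) inv(1) y(3) by auto
  qed
  then show "unique_4cycle_through (CAG_edges n) {id, cycle3 a b c, cycle3 d e f}"
    unfolding \<tau>_def \<kappa>_def .
qed

lemma CAG_not_unique_4cycle_through:
  assumes S: "{\<tau>, \<kappa>, s, t, s', t'} \<subseteq> three_cycles n"
    and "s \<circ> \<tau> = t \<circ> \<kappa>" and "s' \<circ> \<tau> = t' \<circ> \<kappa>"
    and "distinct [id, \<tau>, s \<circ> \<tau>, s' \<circ> \<tau>, \<kappa>]"
  shows "\<not> unique_4cycle_through (CAG_edges n) {id, \<tau>, \<kappa>}"
proof (rule not_unique_4cycle_through[where x = "s \<circ> \<tau>" and y = "s' \<circ> \<tau>"])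
  show "distinct [id, \<tau>, s \<circ> \<tau>, \<kappa>]" "distinct [id, \<tau>, s' \<circ> \<tau>, \<kappa>]" "s \<circ> \<tau> \<noteq> s' \<circ> \<tau>"
    using assms(4) by auto
  have A: "\<tau> \<in> alt_group_set n" "\<kappa> \<in> alt_group_set n"
    using S three_cycles_subset_alt_group_set by auto
  have "{id, \<tau>} \<in> CAG_edges n" "{\<kappa>, id} \<in> CAG_edges n"
    using S CAG_edge_id[of \<tau> n] CAG_edge_id[of \<kappa> n] by (auto simp: insert_commute)
  moreover have "{\<tau>, s \<circ> \<tau>} \<in> CAG_edges n" "{\<tau>, s' \<circ> \<tau>} \<in> CAG_edges n"
    using S CAG_edgeI[OF A(1), of s] CAG_edgeI[OF A(1), of s'] by auto
  moreover have "{s \<circ> \<tau>, \<kappa>} \<in> CAG_edges n" "{s' \<circ> \<tau>, \<kappa>} \<in> CAG_edges n"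
    using S CAG_edgeI[OF A(2), of t] CAG_edgeI[OF A(2), of t'] assms(2,3)
    by (auto simp: insert_commute)
  ultimately show "{{id, \<tau>}, {\<tau>, s \<circ> \<tau>}, {s \<circ> \<tau>, \<kappa>}, {\<kappa>, id}} \<subseteq> CAG_edges n"
    and "{{id, \<tau>}, {\<tau>, s' \<circ> \<tau>}, {s' \<circ> \<tau>, \<kappa>}, {\<kappa>, id}} \<subseteq> CAG_edges n"
    by simp_all
qed

lemma three_cycles_sharing_one_point:
  assumes "distinct [a, b, c, d, e]" and "{a, b, c, d, e} \<subseteq> {1..n}"
  shows "cycle3 a b c \<circ> cycle3 a d e \<noteq> cycle3 a d e \<circ> cycle3 a b c"
    and "\<not> unique_4cycle_through (CAG_edges n) {id, cycle3 a b c, cycle3 a d e}"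
proof -
  show "cycle3 a b c \<circ> cycle3 a d e \<noteq> cycle3 a d e \<circ> cycle3 a b c"
  proof
    assume "cycle3 a b c \<circ> cycle3 a d e = cycle3 a d e \<circ> cycle3 a b c"
    from fun_cong[OF this, of a] show False using assms(1) by (auto simp: cycle3_apply)
  qed
  show "\<not> unique_4cycle_through (CAG_edges n) {id, cycle3 a b c, cycle3 a d e}"
  proof (rule CAG_not_unique_4cycle_through[where s = "cycle3 b d c" and t = "cycle3 a e c"
        and s' = "cycle3 b d e" and t' = "cycle3 a b c"])
    show "{cycle3 a b c, cycle3 a d e, cycle3 b d c, cycle3 a e c, cycle3 b d e, cycle3 a b c}
        \<subseteq> three_cycles n"
      using assms by (auto intro!: cycle3_in_three_cycles)
    show "cycle3 b d c \<circ> cycle3 a b c = cycle3 a e c \<circ> cycle3 a d e"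
      "cycle3 b d e \<circ> cycle3 a b c = cycle3 a b c \<circ> cycle3 a d e"
      using assms(1) by (auto simp: fun_eq_iff cycle3_apply)
    show "distinct [id, cycle3 a b c, cycle3 b d c \<circ> cycle3 a b c, cycle3 b d e \<circ> cycle3 a b c,
        cycle3 a d e]"
      using assms(1)
      by (intro distinct_map_imp_distinct[of "\<lambda>g. (g a, g b, g d)"]) (auto simp: cycle3_apply)
  qed
qed

lemma three_cycles_sharing_two_points:
  assumes "distinct [a, b, c, d]" and "{a, b, c, d} \<subseteq> {1..n}"
  shows "cycle3 a b c \<circ> cycle3 a b d \<noteq> cycle3 a b d \<circ> cycle3 a b c"
    and "\<not> unique_4cycle_through (CAG_edges n) {id, cycle3 a b c, cycle3 a b d}"
proof -
  show "cycle3 a b c \<circ> cycle3 a b d \<noteq> cycle3 a b d \<circ> cycle3 a b c"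
  proof
    assume "cycle3 a b c \<circ> cycle3 a b d = cycle3 a b d \<circ> cycle3 a b c"
    from fun_cong[OF this, of a] show False using assms(1) by (auto simp: cycle3_apply)
  qed
  show "\<not> unique_4cycle_through (CAG_edges n) {id, cycle3 a b c, cycle3 a b d}"
  proof (rule CAG_not_unique_4cycle_through[where s = "cycle3 a b d" and t = "cycle3 b d c"
        and s' = "cycle3 b c d" and t' = "cycle3 a b c"])
    show "{cycle3 a b c, cycle3 a b d, cycle3 a b d, cycle3 b d c, cycle3 b c d, cycle3 a b c}
        \<subseteq> three_cycles n"
      using assms by (auto intro!: cycle3_in_three_cycles)
    show "cycle3 a b d \<circ> cycle3 a b c = cycle3 b d c \<circ> cycle3 a b d"
      "cycle3 b c d \<circ> cycle3 a b c = cycle3 a b c \<circ> cycle3 a b d"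
      using assms(1) by (auto simp: fun_eq_iff cycle3_apply)
    show "distinct [id, cycle3 a b c, cycle3 a b d \<circ> cycle3 a b c, cycle3 b c d \<circ> cycle3 a b c,
        cycle3 a b d]"
      using assms(1)
      by (intro distinct_map_imp_distinct[of "\<lambda>g. (g a, g b, g c, g d)"]) (auto simp: cycle3_apply)
  qed
qed

lemma three_cycles_sharing_two_points_reversed:
  assumes "distinct [a, b, c, d]" and "{a, b, c, d} \<subseteq> {1..n}"
  shows "cycle3 a b c \<circ> cycle3 a d b \<noteq> cycle3 a d b \<circ> cycle3 a b c"
    and "\<not> unique_4cycle_through (CAG_edges n) {id, cycle3 a b c, cycle3 a d b}"
proof -
  show "cycle3 a b c \<circ> cycle3 a d b \<noteq> cycle3 a d b \<circ> cycle3 a b c"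
  proof
    assume "cycle3 a b c \<circ> cycle3 a d b = cycle3 a d b \<circ> cycle3 a b c"
    from fun_cong[OF this, of a] show False using assms(1) by (auto simp: cycle3_apply)
  qed
  show "\<not> unique_4cycle_through (CAG_edges n) {id, cycle3 a b c, cycle3 a d b}"
  proof (rule CAG_not_unique_4cycle_through[where s = "cycle3 a b d" and t = "cycle3 a c b"
        and s' = "cycle3 a c d" and t' = "cycle3 a d b"])
    show "{cycle3 a b c, cycle3 a d b, cycle3 a b d, cycle3 a c b, cycle3 a c d, cycle3 a d b}
        \<subseteq> three_cycles n"
      using assms by (auto intro!: cycle3_in_three_cycles)
    show "cycle3 a b d \<circ> cycle3 a b c = cycle3 a c b \<circ> cycle3 a d b"
      "cycle3 a c d \<circ> cycle3 a b c = cycle3 a d b \<circ> cycle3 a d b"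
      using assms(1) by (auto simp: fun_eq_iff cycle3_apply)
    show "distinct [id, cycle3 a b c, cycle3 a b d \<circ> cycle3 a b c, cycle3 a c d \<circ> cycle3 a b c,
        cycle3 a d b]"
      using assms(1)
      by (intro distinct_map_imp_distinct[of "\<lambda>g. (g a, g b, g c, g d)"]) (auto simp: cycle3_apply)
  qed
qed

lemma inverse_three_cycles:
  assumes "distinct [a, b, c, d]" and "{a, b, c, d} \<subseteq> {1..n}"
  shows "cycle3 a b c \<circ> cycle3 a c b = id"
    and "\<not> unique_4cycle_through (CAG_edges n) {id, cycle3 a b c, cycle3 a c b}"
proof -
  show "cycle3 a b c \<circ> cycle3 a c b = id"
    using assms(1) cycle3_inverse[of a c b] by auto
  show "\<not> unique_4cycle_through (CAG_edges n) {id, cycle3 a b c, cycle3 a c b}"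
  proof (rule CAG_not_unique_4cycle_through[where s = "cycle3 a b d" and t = "cycle3 a c d"
        and s' = "cycle3 b c d" and t' = "cycle3 a d b"])
    show "{cycle3 a b c, cycle3 a c b, cycle3 a b d, cycle3 a c d, cycle3 b c d, cycle3 a d b}
        \<subseteq> three_cycles n"
      using assms by (auto intro!: cycle3_in_three_cycles)
    show "cycle3 a b d \<circ> cycle3 a b c = cycle3 a c d \<circ> cycle3 a c b"
      "cycle3 b c d \<circ> cycle3 a b c = cycle3 a d b \<circ> cycle3 a c b"
      using assms(1) by (auto simp: fun_eq_iff cycle3_apply)
    show "distinct [id, cycle3 a b c, cycle3 a b d \<circ> cycle3 a b c, cycle3 b c d \<circ> cycle3 a b c,
        cycle3 a c b]"
      using assms(1)
      by (intro distinct_map_imp_distinct[of "\<lambda>g. (g a, g b)"]) (auto simp: cycle3_apply)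
  qed
qed

lemma three_cycles_sharing_a_point:
  assumes abc: "distinct [a, b, c]" and aef: "distinct [a, e, f]"
    and range: "{a, b, c, e, f} \<subseteq> {1..n}" and "4 \<le> n" and ne: "cycle3 a b c \<noteq> cycle3 a e f"
  shows "\<not> (cycle3 a b c \<circ> cycle3 a e f = cycle3 a e f \<circ> cycle3 a b c
        \<and> cycle3 a b c \<circ> cycle3 a e f \<noteq> id)
      \<and> \<not> unique_4cycle_through (CAG_edges n) {id, cycle3 a b c, cycle3 a e f}"
proof -
  have cab: "cycle3 a b c = cycle3 c a b" using cycle3_rotate[of c a b] abc by auto
  consider "e \<notin> {b, c}" "f \<notin> {b, c}" | "e = b" | "e \<notin> {b, c}" "f = b" | "e \<notin> {b, c}" "f = c"
    | "e = c" "f = b" | "e = c" "f \<noteq> b"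
    by blast
  then show ?thesis
  proof cases
    case 1
    then show ?thesis using three_cycles_sharing_one_point[of a b c e f n] abc aef range by auto
  next
    case 2
    then have "f \<noteq> c" using ne by auto
    then show ?thesis using three_cycles_sharing_two_points[of a b c f n] 2 abc aef range by auto
  next
    case 3
    then show ?thesis
      using three_cycles_sharing_two_points_reversed[of a b c e n] abc aef range by auto
  next
    case 4
    then have "cycle3 a e f = cycle3 c a e" using cycle3_rotate[of c a e] aef by auto
    then show ?thesis
      using three_cycles_sharing_two_points[of c a b e n] cab 4 abc aef range by auto
  next
    case 5
    have "\<not> {1..n} \<subseteq> {a, b, c}"
    proof
      assume "{1..n} \<subseteq> {a, b, c}"
      then have "card {1..n} \<le> card (set [a, b, c])" by (intro card_mono) auto
      also have "\<dots> \<le> 3" using card_length[of "[a, b, c]"] by simp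
      finally show False using \<open>4 \<le> n\<close> by simp
    qed
    then obtain d where "d \<in> {1..n}" "d \<notin> {a, b, c}" by blast
    then show ?thesis using inverse_three_cycles[of a b c d n] 5 abc range by auto
  next
    case 6
    then have "cycle3 a e f = cycle3 c f a" using cycle3_rotate[of a c f] aef by auto
    then show ?thesis
      using three_cycles_sharing_two_points_reversed[of c a b f n] cab 6 abc aef range by auto
  qed
qed

theorem lemma3p1:
  fixes n :: nat and \<tau> \<kappa> :: "nat \<Rightarrow> nat"
  assumes "n \<ge> 5"
    and "\<tau> \<in> three_cycles n" and "\<kappa> \<in> three_cycles n" and "\<tau> \<noteq> \<kappa>"
  shows "(\<tau> \<circ> \<kappa> = \<kappa> \<circ> \<tau> \<and> \<tau> \<circ> \<kappa> \<noteq> id) \<longleftrightarrow>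
    (\<exists>!C. is_4cycle (cay_edges (alt_group_set n) (three_cycles n)) C \<and> {id, \<tau>, \<kappa>} \<subseteq> \<Union>C)"
proof -
  obtain a b c where \<tau>: "\<tau> = cycle3 a b c" "distinct [a, b, c]" "{a, b, c} \<subseteq> {1..n}"
    using assms(2) by (rule three_cyclesE)
  obtain d e f where \<kappa>: "\<kappa> = cycle3 d e f" "distinct [d, e, f]" "{d, e, f} \<subseteq> {1..n}"
    using assms(3) by (rule three_cyclesE)
  show ?thesis
  proof (cases "{a, b, c} \<inter> {d, e, f} = {}")
    case True
    then have "distinct [a, b, c, d, e, f]" using \<tau>(2) \<kappa>(2) by auto
    then show ?thesis
      using disjoint_three_cycles[of a b c d e f n] \<tau> \<kappa>
      unfolding unique_4cycle_through_def by auto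
  next
    case False
    then obtain p where "p \<in> {a, b, c}" "p \<in> {d, e, f}" by blast
    obtain b' c' where \<tau>': "\<tau> = cycle3 p b' c'" "distinct [p, b', c']" "{p, b', c'} = {a, b, c}"
      using cycle3_rotate_to[OF \<tau>(2) \<open>p \<in> {a, b, c}\<close>] \<tau>(1) by metis
    obtain e' f' where \<kappa>': "\<kappa> = cycle3 p e' f'" "distinct [p, e', f']" "{p, e', f'} = {d, e, f}"
      using cycle3_rotate_to[OF \<kappa>(2) \<open>p \<in> {d, e, f}\<close>] \<kappa>(1) by metis
    have "{p, b', c', e', f'} \<subseteq> {1..n}" using \<tau>(3) \<tau>'(3) \<kappa>(3) \<kappa>'(3) by blast
    then show ?thesis
      using three_cycles_sharing_a_point[OF \<tau>'(2) \<kappa>'(2)] assms(1,4) \<tau>'(1) \<kappa>'(1)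
      unfolding unique_4cycle_through_def by auto
  qed
qed

end
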